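(* Let $F\colon\mathbb{R}^{n_1}\times\mathbb{R}^{n_2}\to\mathcal{K}_{bcs}(\mathbb{R}^d)$ be locally integrably bounded and assume also that $M_\mathcal{K}^2F$ is locally integrably bounded. Then $M_\mathcal{K}^sF(x)\subset M_\mathcal{K}^1M_\mathcal{K}^2F(x)$ for every $x\in\mathbb{R}^{n_1}\times\mathbb{R}^{n_2}$.
   Context: $\mathcal{K}_{bcs}(\mathbb{R}^d)$ is the collection of compact, convex, symmetric subsets of $\mathbb{R}^d$. For $A\subset\mathbb{R}^d$, $|A|:=\sup\{|a|:a\in A\}$. A set-valued $F\colon\mathbb{R}^n\to\mathcal{K}(\mathbb{R}^d)$ (closed sets) is measurable iff there are measurable $f_k\colon\mathbb{R}^n\to\mathbb{R}^d$ with $F(x)=\overline{\{f_k(x):k\in\mathbb{N}\}}$ for all $x$; it is locally integrably bounded if $|F(x)|\le k(x)$ for all $x$ with some $k\in L^1_{loc}$. $S^0(F)$ is the set of measurable $f\colon\mathbb{R}^n\to\mathbb{R}^d$ with $f(x)\in F(x)$ for all $x$. For a set $E$ of positive finite measure, $\langle F\rangle_E:=\{\fint_E f:f\in S^0(F)\}$ (Aumann average). $\mathcal{R}$ is the set of rectangles $Q_1\times Q_2$ with $Q_i\subset\mathbb{R}^{n_i}$ axis-parallel cubes. The strong convex set-valued maximal operator is $M_\mathcal{K}^sF(x):=\overline{\operatorname{conv}}\big(\{\langle f\rangle_R1_R(x):R\in\mathcal{R},f\in S^0(F)\}\big)$. The one-parameter operator on $\mathbb{R}^m$ is $M_\mathcal{K}G(x):=\overline{\operatorname{conv}}\big(\{\langle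 g\rangle_Q1_Q(x):Q\subset\mathbb{R}^m\text{ cube},g\in S^0(G)\}\big)$, and $M_\mathcal{K}^1F(x_1,x_2):=M_\mathcal{K}(F(\cdot,x_2))(x_1)$, $M_\mathcal{K}^2F(x_1,x_2):=M_\mathcal{K}(F(x_1,\cdot))(x_2)$. *)

theory Defs
  imports "HOL-Analysis.Analysis"
begin

definition kbcs :: "'a::euclidean_space set \<Rightarrow> bool" where
  "kbcs A \<longleftrightarrow> compact A \<and> convex A \<and> uminus ` A = A"

definition loc_integrable :: "('a::euclidean_space \<Rightarrow> real) \<Rightarrow> bool" where
  "loc_integrable k \<longleftrightarrow> (\<forall>K. compact K \<longrightarrow> set_integrable lebesgue K k)"

definition loc_int_bounded :: "('a::euclidean_space \<Rightarrow> 'c::euclidean_space set) \<Rightarrow> bool" where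
  "loc_int_bounded F \<longleftrightarrow>
     (\<exists>k. loc_integrable k \<and> (\<forall>x. \<forall>a\<in>F x. norm a \<le> k x))"

definition S0 :: "('a::euclidean_space \<Rightarrow> 'c::euclidean_space set) \<Rightarrow> ('a \<Rightarrow> 'c) set" where
  "S0 F = {f. f \<in> borel_measurable lebesgue \<and> (\<forall>x. f x \<in> F x)}"

definition avg :: "'a::euclidean_space set \<Rightarrow> ('a \<Rightarrow> 'c::euclidean_space) \<Rightarrow> 'c" where
  "avg E f = (1 / measure lebesgue E) *\<^sub>R (LINT y:E|lebesgue. f y)"

definition cubes :: "'a::euclidean_space set set" where
  "cubes = {cbox a (a + h *\<^sub>R One) | a h. h > 0}"

definition rects :: "('a::euclidean_space \<times> 'b::euclidean_space) set set" where
  "rects = {Q1 \<times> Q2 | Q1 Q2. Q1 \<in> cubes \<and> Q2 \<in> cubes}"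

definition maxK :: "'a::euclidean_space set set \<Rightarrow> ('a \<Rightarrow> 'c::euclidean_space set) \<Rightarrow> 'a \<Rightarrow> 'c set" where
  "maxK \<Q> F x = closure (convex hull
      {indicator Q x *\<^sub>R avg Q f | Q f. Q \<in> \<Q> \<and> f \<in> S0 F})"

definition MK :: "('a::euclidean_space \<Rightarrow> 'c::euclidean_space set) \<Rightarrow> 'a \<Rightarrow> 'c set" where
  "MK G = maxK cubes G"

definition MKs :: "('a::euclidean_space \<times> 'b::euclidean_space \<Rightarrow> 'c::euclidean_space set)
                    \<Rightarrow> 'a \<times> 'b \<Rightarrow> 'c set" where
  "MKs F = maxK rects F"

definition MK1 :: "('a::euclidean_space \<times> 'b::euclidean_space \<Rightarrow> 'c::euclidean_space set)
                    \<Rightarrow> 'a \<times> 'b \<Rightarrow> 'c set" where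
  "MK1 F = (\<lambda>(x1, x2). MK (\<lambda>y1. F (y1, x2)) x1)"

definition MK2 :: "('a::euclidean_space \<times> 'b::euclidean_space \<Rightarrow> 'c::euclidean_space set)
                    \<Rightarrow> 'a \<times> 'b \<Rightarrow> 'c set" where
  "MK2 F = (\<lambda>(x1, x2). MK (\<lambda>y2. F (x1, y2)) x2)"

end

theory Submission
  imports Defs
begin

text \<open>A generator of \<open>MKs F x\<close> is the average of a selection \<open>f\<close> of \<open>F\<close> over a rectangle
\<open>Q1 \<times> Q2\<close> containing \<open>x = (x1, x2)\<close>. By Fubini it is the \<open>Q1\<close>-average of
\<open>y1 \<mapsto> avg Q2 (\<lambda>y2. f (y1, y2))\<close>, and this function is a measurable selection of
\<open>y1 \<mapsto> MK2 F (y1, x2)\<close>, each of its values being a generator of that set. So every generator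
lies in the closed convex set \<open>MK1 (MK2 F) x\<close>, and hence so does their closed convex hull.\<close>

lemma completion_ex_borel_measurable_euclidean:
  fixes f :: "'a \<Rightarrow> 'c::euclidean_space"
  assumes "f \<in> borel_measurable (completion M)"
  obtains g where "g \<in> borel_measurable M" "AE x in M. f x = g x"
proof -
  have "\<forall>b\<in>Basis. \<exists>g\<in>borel_measurable M. AE x in M. f x \<bullet> b = g x"
    using assms
    by (intro ballI completion_ex_borel_measurable_real borel_measurable_inner borel_measurable_const)
  then obtain g where g: "\<And>b. b \<in> Basis \<Longrightarrow> g b \<in> borel_measurable M"
      "\<And>b. b \<in> Basis \<Longrightarrow> AE x in M. f x \<bullet> b = g b x"
    by metis
  have "AE x in M. \<forall>b\<in>Basis. f x \<bullet> b = g b x"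
    using g(2) by (subst AE_finite_all) auto
  then have "AE x in M. f x = (\<Sum>b\<in>Basis. g b x *\<^sub>R b)"
    by eventually_elim (metis (no_types, lifting) euclidean_representation sum.cong)
  moreover have "(\<lambda>x. \<Sum>b\<in>Basis. g b x *\<^sub>R b) \<in> borel_measurable M"
    using g(1) by (intro borel_measurable_sum borel_measurable_scaleR) auto
  ultimately show thesis using that by blast
qed

lemma
  fixes f g :: "'a::euclidean_space \<Rightarrow> 'c::euclidean_space"
  assumes f: "f \<in> borel_measurable lebesgue" and g: "g \<in> borel_measurable lborel"
    and ae: "AE x in lborel. f x = g x" and A: "A \<in> sets lborel"
  shows set_integrable_lebesgue_AE_borel: "set_integrable lebesgue A f \<longleftrightarrow> set_integrable lborel A g"
    and set_integral_lebesgue_AE_borel: "(LINT x:A|lebesgue. f x) = (LINT x:A|lborel. g x)"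
proof -
  have gA: "(\<lambda>x. indicator A x *\<^sub>R g x) \<in> borel_measurable lborel"
    using g A by measurable
  have fA: "(\<lambda>x. indicator A x *\<^sub>R f x) \<in> borel_measurable lebesgue"
    using A by (intro borel_measurable_scaleR borel_measurable_indicator f) auto
  have ae_lebesgue: "AE x in lebesgue. indicator A x *\<^sub>R f x = indicator A x *\<^sub>R g x"
    using ae by (intro AE_completion) auto
  show "set_integrable lebesgue A f \<longleftrightarrow> set_integrable lborel A g"
    unfolding set_integrable_def
    using integrable_cong_AE[OF fA measurable_completion[OF gA] ae_lebesgue]
      integrable_completion[OF gA] by simp
  show "(LINT x:A|lebesgue. f x) = (LINT x:A|lborel. g x)"
    unfolding set_lebesgue_integral_def
    using integral_cong_AE[OF fA measurable_completion[OF gA] ae_lebesgue]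
      integral_completion[OF gA] by simp
qed

lemma set_integral_lborel_Times:
  fixes f :: "'a::euclidean_space \<times> 'b::euclidean_space \<Rightarrow> 'c::{banach, second_countable_topology}"
  assumes "set_integrable lborel (A \<times> B) f"
  shows "(LINT z:A \<times> B|lborel. f z) = (LINT y1:A|lborel. (LINT y2:B|lborel. f (y1, y2)))"
proof -
  have "integrable (lborel \<Otimes>\<^sub>M lborel) (\<lambda>z. indicator (A \<times> B) z *\<^sub>R f z)"
    using assms unfolding set_integrable_def by (simp add: lborel_prod)
  from lborel_pair.integral_fst'[OF this]
  have "(LINT z:A \<times> B|lborel. f z)
      = (\<integral>y1. (\<integral>y2. indicator (A \<times> B) (y1, y2) *\<^sub>R f (y1, y2) \<partial>lborel) \<partial>lborel)"
    by (simp add: set_lebesgue_integral_def lborel_prod)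
  then show ?thesis
    by (simp add: set_lebesgue_integral_def indicator_times flip: integral_scaleR_right)
qed

lemma measure_lebesgue_Times:
  fixes A :: "'a::euclidean_space set" and B :: "'b::euclidean_space set"
  assumes A: "A \<in> sets lborel" and B: "B \<in> sets lborel"
    and "emeasure lborel A < \<infinity>" "emeasure lborel B < \<infinity>"
  shows "measure lebesgue (A \<times> B) = measure lebesgue A * measure lebesgue B"
proof -
  have AB: "A \<times> B \<in> sets (lborel :: ('a \<times> 'b) measure)"
    using A B by (metis lborel_prod pair_measureI)
  have "emeasure (lborel :: ('a \<times> 'b) measure) (A \<times> B) = emeasure lborel A * emeasure lborel B"
    by (metis A B lborel_prod lborel.emeasure_pair_measure_Times)
  then have "measure (lborel :: ('a \<times> 'b) measure) (A \<times> B) = measure lborel A * measure lborel B"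
    unfolding measure_def by (simp add: enn2real_mult)
  then show ?thesis
    using A B AB by simp
qed

text \<open>Sections of a Lebesgue measurable function need not be Lebesgue measurable; the junk value
  \<open>0\<close> on the exceptional null set of \<open>y1\<close> is harmless since \<open>0 \<in> MK2 F (y1, x2)\<close>.\<close>
definition section_avg ::
    "'b::euclidean_space set \<Rightarrow> ('a \<times> 'b \<Rightarrow> 'c::euclidean_space) \<Rightarrow> 'a \<Rightarrow> 'c" where
  "section_avg B f y1 =
     (if (\<lambda>y2. f (y1, y2)) \<in> borel_measurable lebesgue then avg B (\<lambda>y2. f (y1, y2)) else 0)"

lemma AE_section_avg_eq:
  fixes f f' :: "'a::euclidean_space \<times> 'b::euclidean_space \<Rightarrow> 'c::euclidean_space"
  assumes f': "f' \<in> borel_measurable lborel" and ae: "AE z in lborel. f z = f' z"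
    and B: "B \<in> sets lborel"
  shows "AE y1 in lborel. section_avg B f y1
           = (1 / measure lebesgue B) *\<^sub>R (LINT y2:B|lborel. f' (y1, y2))"
proof -
  have [measurable]: "f' \<in> borel_measurable (lborel \<Otimes>\<^sub>M lborel)"
    using f' by (simp add: lborel_prod)
  have "AE y1 in lborel. AE y2 in lborel. f (y1, y2) = f' (y1, y2)"
    using ae unfolding lborel_prod[symmetric] by (rule lborel_pair.AE_pair)
  then show ?thesis
  proof eventually_elim
    case (elim y1)
    have section': "(\<lambda>y2. f' (y1, y2)) \<in> borel_measurable lborel"
      by measurable
    have "AE y2 in lebesgue. f' (y1, y2) = f (y1, y2)"
      using elim by (intro AE_completion) auto
    then have "(\<lambda>y2. f (y1, y2)) \<in> borel_measurable lebesgue"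
      by (rule borel_measurable_AE[OF measurable_completion[OF section']])
    then show ?case
      unfolding section_avg_def avg_def
      using set_integral_lebesgue_AE_borel[OF _ section' elim B] by simp
  qed
qed

lemma borel_measurable_section_avg:
  fixes f :: "'a::euclidean_space \<times> 'b::euclidean_space \<Rightarrow> 'c::euclidean_space"
  assumes "f \<in> borel_measurable lebesgue" and B: "B \<in> sets lborel"
  shows "section_avg B f \<in> borel_measurable lebesgue"
proof -
  obtain f' where f': "f' \<in> borel_measurable lborel" and ae: "AE z in lborel. f z = f' z"
    using completion_ex_borel_measurable_euclidean assms(1) by blast
  have [measurable]: "f' \<in> borel_measurable (lborel \<Otimes>\<^sub>M lborel)"
    using f' by (simp add: lborel_prod)
  have "(\<lambda>y1. (1 / measure lebesgue B) *\<^sub>R (LINT y2:B|lborel. f' (y1, y2))) \<in> borel_measurable lborel"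
    using B unfolding set_lebesgue_integral_def by measurable
  moreover have "AE y1 in lebesgue. (1 / measure lebesgue B) *\<^sub>R (LINT y2:B|lborel. f' (y1, y2))
                   = section_avg B f y1"
    using AE_section_avg_eq[OF f' ae B] by (intro AE_completion) auto
  ultimately show ?thesis
    by (intro borel_measurable_AE[OF measurable_completion])
qed

lemma avg_section_avg:
  fixes f :: "'a::euclidean_space \<times> 'b::euclidean_space \<Rightarrow> 'c::euclidean_space"
  assumes f: "f \<in> borel_measurable lebesgue" and int: "set_integrable lebesgue (A \<times> B) f"
    and A: "A \<in> sets lborel" and B: "B \<in> sets lborel"
    and "emeasure lborel A < \<infinity>" "emeasure lborel B < \<infinity>"
  shows "avg A (section_avg B f) = avg (A \<times> B) f"
proof -
  obtain f' where f': "f' \<in> borel_measurable lborel" and ae: "AE z in lborel. f z = f' z"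
    using completion_ex_borel_measurable_euclidean f by blast
  have [measurable]: "f' \<in> borel_measurable (lborel \<Otimes>\<^sub>M lborel)"
    using f' by (simp add: lborel_prod)
  have AB: "A \<times> B \<in> sets (lborel :: ('a \<times> 'b) measure)"
    using A B by (metis lborel_prod pair_measureI)
  define h where "h y1 = (1 / measure lebesgue B) *\<^sub>R (LINT y2:B|lborel. f' (y1, y2))" for y1
  have h: "h \<in> borel_measurable lborel"
    unfolding h_def set_lebesgue_integral_def using B by measurable
  have "(LINT y1:A|lebesgue. section_avg B f y1) = (LINT y1:A|lborel. h y1)"
    using set_integral_lebesgue_AE_borel[OF borel_measurable_section_avg[OF f B] h
        AE_section_avg_eq[OF f' ae B, folded h_def] A] .
  also have "\<dots> = (1 / measure lebesgue B) *\<^sub>R (LINT z:A \<times> B|lborel. f' z)"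
    unfolding h_def using int set_integrable_lebesgue_AE_borel[OF f f' ae AB]
    by (simp add: set_integral_lborel_Times)
  also have "(LINT z:A \<times> B|lborel. f' z) = (LINT z:A \<times> B|lebesgue. f z)"
    using set_integral_lebesgue_AE_borel[OF f f' ae AB] by simp
  finally show ?thesis
    unfolding avg_def measure_lebesgue_Times[OF A B assms(5,6)] by simp
qed

lemma kbcs_zero_mem:
  assumes "kbcs A" and "a \<in> A"
  shows "0 \<in> A"
proof -
  have "-a \<in> A" and "convex A"
    using assms unfolding kbcs_def by (metis imageI)+
  then have "(1/2::real) *\<^sub>R a + (1/2::real) *\<^sub>R (-a) \<in> A"
    using assms(2) by (intro convexD) auto
  then show ?thesis by simp
qed

lemma maxK_generator:
  "Q \<in> \<Q> \<Longrightarrow> f \<in> S0 F \<Longrightarrow> indicator Q x *\<^sub>R avg Q f \<in> maxK \<Q> F x"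
  unfolding maxK_def by (rule subsetD[OF closure_subset], rule hull_inc) blast

lemma closed_maxK: "closed (maxK \<Q> F x)"
  unfolding maxK_def by simp

lemma convex_maxK: "convex (maxK \<Q> F x)"
  unfolding maxK_def by (simp add: convex_closure)

lemma maxK_minimal:
  assumes "\<And>Q f. Q \<in> \<Q> \<Longrightarrow> f \<in> S0 F \<Longrightarrow> indicator Q x *\<^sub>R avg Q f \<in> C"
    and "closed C" and "convex C"
  shows "maxK \<Q> F x \<subseteq> C"
  unfolding maxK_def using assms by (intro closure_minimal hull_minimal) auto

lemma zero_in_maxK:
  assumes "\<Q> \<noteq> {}" and "\<And>y. 0 \<in> G y"
  shows "0 \<in> maxK \<Q> G x"
proof -
  obtain Q where "Q \<in> \<Q>" using assms(1) by blast
  moreover have "(\<lambda>_. 0) \<in> S0 G" unfolding S0_def using assms(2) by auto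
  ultimately show ?thesis using maxK_generator by (fastforce simp: avg_def)
qed

lemma cubes_nonempty: "cubes \<noteq> {}"
  unfolding cubes_def using zero_less_one by blast

lemma cubeD:
  assumes "Q \<in> cubes"
  shows "Q \<in> sets lborel" and "emeasure lborel Q < \<infinity>" and "compact Q"
  using assms emeasure_lborel_cbox_finite unfolding cubes_def by auto

lemma zero_in_MK2: "(\<And>z. 0 \<in> F z) \<Longrightarrow> 0 \<in> MK2 F x"
  unfolding MK2_def MK_def by (cases x) (auto intro!: zero_in_maxK[OF cubes_nonempty])

lemma zero_in_MK1: "(\<And>z. 0 \<in> F z) \<Longrightarrow> 0 \<in> MK1 F x"
  unfolding MK1_def MK_def by (cases x) (auto intro!: zero_in_maxK[OF cubes_nonempty])

lemma set_integrable_selection: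
  assumes "loc_int_bounded F" and f: "f \<in> S0 F" and "compact K"
  shows "set_integrable lebesgue K f"
proof -
  obtain k where "loc_integrable k" and k: "\<And>x a. a \<in> F x \<Longrightarrow> norm a \<le> k x"
    using assms(1) unfolding loc_int_bounded_def by blast
  then have "integrable lebesgue (\<lambda>x. indicator K x *\<^sub>R k x)"
    using \<open>compact K\<close> unfolding loc_integrable_def set_integrable_def by blast
  then show ?thesis
    unfolding set_integrable_def
  proof (rule Bochner_Integration.integrable_bound)
    have "K \<in> sets lebesgue"
      using \<open>compact K\<close> by (simp add: borel_compact sets_completionI_sets)
    then show "(\<lambda>x. indicator K x *\<^sub>R f x) \<in> borel_measurable lebesgue"
      using f unfolding S0_def by (intro borel_measurable_scaleR borel_measurable_indicator) auto
    have "norm (indicator K x *\<^sub>R f x) \<le> norm (indicator K x *\<^sub>R k x)" for x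
      using k[of "f x" x] f unfolding S0_def by (auto simp: indicator_def)
    then show "AE x in lebesgue. norm (indicator K x *\<^sub>R f x) \<le> norm (indicator K x *\<^sub>R k x)"
      by simp
  qed
qed

lemma section_avg_in_MK2:
  assumes f: "f \<in> S0 F" and F0: "\<And>z. 0 \<in> F z" and "Q2 \<in> cubes" and "x2 \<in> Q2"
  shows "section_avg Q2 f y1 \<in> MK2 F (y1, x2)"
proof (cases "(\<lambda>y2. f (y1, y2)) \<in> borel_measurable lebesgue")
  case True
  then have "(\<lambda>y2. f (y1, y2)) \<in> S0 (\<lambda>y2. F (y1, y2))"
    using f unfolding S0_def by auto
  from maxK_generator[OF \<open>Q2 \<in> cubes\<close> this, of x2] show ?thesis
    using True \<open>x2 \<in> Q2\<close> unfolding section_avg_def MK2_def MK_def by simp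
next
  case False
  then show ?thesis using zero_in_MK2[OF F0] unfolding section_avg_def by simp
qed

lemma avg_rect_in_MK1_MK2:
  assumes "loc_int_bounded F" and F0: "\<And>z. 0 \<in> F z" and f: "f \<in> S0 F"
    and Q1: "Q1 \<in> cubes" and Q2: "Q2 \<in> cubes" and "x1 \<in> Q1" and "x2 \<in> Q2"
  shows "avg (Q1 \<times> Q2) f \<in> MK1 (MK2 F) (x1, x2)"
proof -
  have f_meas: "f \<in> borel_measurable lebesgue" using f unfolding S0_def by simp
  have "section_avg Q2 f \<in> S0 (\<lambda>y1. MK2 F (y1, x2))"
    unfolding S0_def
    using borel_measurable_section_avg[OF f_meas cubeD(1)[OF Q2]]
      section_avg_in_MK2[OF f F0 Q2 \<open>x2 \<in> Q2\<close>] by simp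
  from maxK_generator[OF Q1 this, of x1]
  have "avg Q1 (section_avg Q2 f) \<in> MK1 (MK2 F) (x1, x2)"
    using \<open>x1 \<in> Q1\<close> unfolding MK1_def MK_def by simp
  moreover have "set_integrable lebesgue (Q1 \<times> Q2) f"
    using set_integrable_selection[OF assms(1) f] cubeD(3)[OF Q1] cubeD(3)[OF Q2]
    by (simp add: compact_Times)
  ultimately show ?thesis
    using avg_section_avg[OF f_meas _ cubeD(1)[OF Q1] cubeD(1)[OF Q2] cubeD(2)[OF Q1] cubeD(2)[OF Q2]] by simp
qed

theorem lemma3p1:
  fixes F :: "'a::euclidean_space \<times> 'b::euclidean_space \<Rightarrow> 'c::euclidean_space set"
  assumes "\<And>x. kbcs (F x)"
    and "loc_int_bounded F"
    and "loc_int_bounded (MK2 F)"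
  shows "\<forall>x. MKs F x \<subseteq> MK1 (MK2 F) x"
proof
  fix x :: "'a \<times> 'b"
  obtain x1 x2 where x: "x = (x1, x2)" by (cases x)
  have "closed (MK1 (MK2 F) x)" and "convex (MK1 (MK2 F) x)"
    unfolding x MK1_def MK_def by (simp_all add: closed_maxK convex_maxK)
  then show "MKs F x \<subseteq> MK1 (MK2 F) x"
    unfolding MKs_def
  proof (rule maxK_minimal[rotated])
    fix R :: "('a \<times> 'b) set" and f assume "R \<in> rects" and f: "f \<in> S0 F"
    then obtain Q1 Q2 where R: "R = Q1 \<times> Q2" and "Q1 \<in> cubes" and "Q2 \<in> cubes"
      unfolding rects_def by blast
    have F0: "0 \<in> F z" for z
      using kbcs_zero_mem[OF assms(1)] f unfolding S0_def by blast
    show "indicator R x *\<^sub>R avg R f \<in> MK1 (MK2 F) x"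
    proof (cases "x \<in> R")
      case True
      then show ?thesis
        using avg_rect_in_MK1_MK2[OF assms(2) F0 f \<open>Q1 \<in> cubes\<close> \<open>Q2 \<in> cubes\<close>] R x by auto
    next
      case False
      then show ?thesis using zero_in_MK1[OF zero_in_MK2[OF F0]] by simp
    qed
  qed
qed

end
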